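(* Let $X$ be an exponential vector space over a field $K$ such that $X\smallsetminus X_0$ has a basis and $\dim X=[\alpha:\beta]$. Let $\gamma,\delta$ be cardinal numbers with $\gamma\leq\alpha$ and $\delta\leq\beta$. Then there exists a sub exponential vector space $Y$ of $X$ with $\dim Y=[\gamma:\delta]$ (in particular $Y\smallsetminus Y_0$ has a basis).
   Context: An exponential vector space (evs) over a field $K$ is a partially ordered set $(X,\leq)$ with a binary operation $+$ on $X$ and a map $K\times X\to X$, $(\alpha,x)\mapsto \alpha x$, such that: (A1) $(X,+)$ is a commutative semigroup with identity $\theta$; (A2) $x\leq y$ implies $x+z\leq y+z$ and $\alpha x\leq \alpha y$ for all $z\in X$, $\alpha\in K$; (A3) $\alpha(x+y)=\alpha x+\alpha y$, $\alpha(\beta x)=(\alpha\beta)x$, $(\alpha+\beta)x\leq \alpha x+\beta x$, $1x=x$; (A4) $\alpha x=\theta$ iff $\alpha=0$ or $x=\theta$; (A5) $x+(-1)x=\theta$ iff $x\in X_0$, where $X_0:=\{z\in X: y\not\leq z \text{ for all } y\in X\smallsetminus\{z\}\}$ (the set of minimal elements, called the primitive space; it is a vector space over $K$); (A6) for each $x\in X$ there is $p\in X_0$ with $p\leq x$. A subset $Y\subseteq X$ is a sub exponential vector space (subevs) if $Y$ is itself an evs under the restricted operations and order; its primitive space $Y_0$ is the set of minimal elements of $Y$. For $x\in X\smallsetminus X_0$ let $L(x):=\{z\in X: z\geq \alpha x+p \text{ for some } \alpha\in K\smallsetminus\{0\},\ p\in X_0\}$ (for a subevs, testing sets are computed inside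 $Y$ using $Y_0$). A subset $B\subseteq X\smallsetminus X_0$ generates $X\smallsetminus X_0$ if $X\smallsetminus X_0=\bigcup_{b\in B}L(b)$. Elements $x,y\in X\smallsetminus X_0$ are orderly dependent if $x\in L(y)$ or $y\in L(x)$, and orderly independent otherwise; $B$ is orderly independent if any two distinct members are orderly independent. A basis of $X\smallsetminus X_0$ is an orderly independent generating subset. All bases of $X\smallsetminus X_0$ have the same cardinality, denoted $\dim(X\smallsetminus X_0)$; $\dim X_0$ is the vector-space dimension of $X_0$ (taken as $0$ if $X_0=\{\theta\}$), and $\dim X:=[\dim(X\smallsetminus X_0):\dim X_0]$. *)

theory Defs
  imports Main "HOL-Library.Equipollence"
begin

definition prim :: "'x set \<Rightarrow> ('x \<Rightarrow> 'x \<Rightarrow> bool) \<Rightarrow> 'x set" where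
  "prim X le = {z \<in> X. \<forall>y \<in> X - {z}. \<not> le y z}"

definition evs :: "'x set \<Rightarrow> ('x \<Rightarrow> 'x \<Rightarrow> bool) \<Rightarrow> ('x \<Rightarrow> 'x \<Rightarrow> 'x)
    \<Rightarrow> ('k::field \<Rightarrow> 'x \<Rightarrow> 'x) \<Rightarrow> 'x \<Rightarrow> bool" where
  "evs X le add smult th \<longleftrightarrow>
     \<comment> \<open>closure of the operations and partial order on X\<close>
     th \<in> X \<and>
     (\<forall>x\<in>X. \<forall>y\<in>X. add x y \<in> X) \<and>
     (\<forall>a. \<forall>x\<in>X. smult a x \<in> X) \<and>
     (\<forall>x\<in>X. le x x) \<and>
     (\<forall>x\<in>X. \<forall>y\<in>X. le x y \<and> le y x \<longrightarrow> x = y) \<and>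
     (\<forall>x\<in>X. \<forall>y\<in>X. \<forall>z\<in>X. le x y \<and> le y z \<longrightarrow> le x z) \<and>
     \<comment> \<open>(A1)\<close>
     (\<forall>x\<in>X. \<forall>y\<in>X. \<forall>z\<in>X. add (add x y) z = add x (add y z)) \<and>
     (\<forall>x\<in>X. \<forall>y\<in>X. add x y = add y x) \<and>
     (\<forall>x\<in>X. add x th = x) \<and>
     \<comment> \<open>(A2)\<close>
     (\<forall>x\<in>X. \<forall>y\<in>X. le x y \<longrightarrow> (\<forall>z\<in>X. le (add x z) (add y z)) \<and> (\<forall>a. le (smult a x) (smult a y))) \<and>
     \<comment> \<open>(A3)\<close>
     (\<forall>a. \<forall>x\<in>X. \<forall>y\<in>X. smult a (add x y) = add (smult a x) (smult a y)) \<and>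
     (\<forall>a b. \<forall>x\<in>X. smult a (smult b x) = smult (a * b) x) \<and>
     (\<forall>a b. \<forall>x\<in>X. le (smult (a + b) x) (add (smult a x) (smult b x))) \<and>
     (\<forall>x\<in>X. smult 1 x = x) \<and>
     \<comment> \<open>(A4)\<close>
     (\<forall>a. \<forall>x\<in>X. smult a x = th \<longleftrightarrow> a = 0 \<or> x = th) \<and>
     \<comment> \<open>(A5)\<close>
     (\<forall>x\<in>X. add x (smult (-1) x) = th \<longleftrightarrow> x \<in> prim X le) \<and>
     \<comment> \<open>(A6)\<close>
     (\<forall>x\<in>X. \<exists>p\<in>prim X le. le p x)"

definition subevs :: "'x set \<Rightarrow> 'x set \<Rightarrow> ('x \<Rightarrow> 'x \<Rightarrow> bool) \<Rightarrow> ('x \<Rightarrow> 'x \<Rightarrow> 'x)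
    \<Rightarrow> ('k::field \<Rightarrow> 'x \<Rightarrow> 'x) \<Rightarrow> bool" where
  "subevs Y X le add smult \<longleftrightarrow> Y \<subseteq> X \<and> (\<exists>e. evs Y le add smult e)"

definition Lset :: "'x set \<Rightarrow> ('x \<Rightarrow> 'x \<Rightarrow> bool) \<Rightarrow> ('x \<Rightarrow> 'x \<Rightarrow> 'x)
    \<Rightarrow> ('k::field \<Rightarrow> 'x \<Rightarrow> 'x) \<Rightarrow> 'x \<Rightarrow> 'x set" where
  "Lset X le add smult x =
     {z \<in> X. \<exists>a p. a \<noteq> 0 \<and> p \<in> prim X le \<and> le (add (smult a x) p) z}"

definition orderly_basis :: "'x set \<Rightarrow> ('x \<Rightarrow> 'x \<Rightarrow> bool) \<Rightarrow> ('x \<Rightarrow> 'x \<Rightarrow> 'x)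
    \<Rightarrow> ('k::field \<Rightarrow> 'x \<Rightarrow> 'x) \<Rightarrow> 'x set \<Rightarrow> bool" where
  "orderly_basis X le add smult B \<longleftrightarrow>
     B \<subseteq> X - prim X le \<and>
     X - prim X le = (\<Union>b\<in>B. Lset X le add smult b) \<and>
     (\<forall>x\<in>B. \<forall>y\<in>B. x \<noteq> y \<longrightarrow>
        x \<notin> Lset X le add smult y \<and> y \<notin> Lset X le add smult x)"

inductive_set lspan :: "('x \<Rightarrow> 'x \<Rightarrow> 'x) \<Rightarrow> ('k \<Rightarrow> 'x \<Rightarrow> 'x) \<Rightarrow> 'x \<Rightarrow> 'x set \<Rightarrow> 'x set"
  for add smult th H where
    zero: "th \<in> lspan add smult th H"
  | base: "h \<in> H \<Longrightarrow> h \<in> lspan add smult th H"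
  | plus: "x \<in> lspan add smult th H \<Longrightarrow> y \<in> lspan add smult th H \<Longrightarrow> add x y \<in> lspan add smult th H"
  | scale: "x \<in> lspan add smult th H \<Longrightarrow> smult a x \<in> lspan add smult th H"

definition hamel_basis :: "'x set \<Rightarrow> ('x \<Rightarrow> 'x \<Rightarrow> 'x) \<Rightarrow> ('k \<Rightarrow> 'x \<Rightarrow> 'x) \<Rightarrow> 'x \<Rightarrow> 'x set \<Rightarrow> bool" where
  "hamel_basis V add smult th H \<longleftrightarrow>
     H \<subseteq> V \<and> lspan add smult th H = V \<and>
     (\<forall>h\<in>H. h \<notin> lspan add smult th (H - {h}))"

end

(*
  By the cardinality hypotheses we may take G inside the orderly basis and D inside the Hamel
  basis of the primitive space. Replacing each g in G by shift g = g - p, for a primitive p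
  below g, puts it above the zero without enlarging its testing set, so the shifted elements
  stay orderly independent. Then Y = span (shift G) + span D is a sub exponential vector space:
  every element s + v of it dominates v, so its primitive space is exactly span D, and every
  non-primitive element dominates a nonzero multiple of some shift g plus a primitive element.
*)
theory Submission
  imports Defs
begin

lemma lspan_mono: "A \<subseteq> C \<Longrightarrow> lspan add smult th A \<subseteq> lspan add smult th C"
proof
  fix x assume "x \<in> lspan add smult th A" and "A \<subseteq> C"
  then show "x \<in> lspan add smult th C"
    by (induction rule: lspan.induct) (auto intro: lspan.intros)
qed

lemma hamel_basis_subset:
  assumes "hamel_basis V add smult th H" and "D \<subseteq> H"
  shows "hamel_basis (lspan add smult th D) add smult th D"
  unfolding hamel_basis_def
proof (intro conjI ballI)
  show "D \<subseteq> lspan add smult th D" by (auto intro: lspan.base)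
  fix h assume "h \<in> D"
  have "lspan add smult th (D - {h}) \<subseteq> lspan add smult th (H - {h})"
    using assms(2) by (intro lspan_mono) blast
  moreover have "h \<notin> lspan add smult th (H - {h})"
    using assms \<open>h \<in> D\<close> unfolding hamel_basis_def by blast
  ultimately show "h \<notin> lspan add smult th (D - {h})" by blast
qed simp

lemma prim_subset: "prim X le \<subseteq> X"
  unfolding prim_def by blast

lemma prim_minimal: "p \<in> prim X le \<Longrightarrow> y \<in> X \<Longrightarrow> le y p \<Longrightarrow> y = p"
  unfolding prim_def by blast

lemma Lset_subset:
  "Y \<subseteq> X \<Longrightarrow> prim Y le \<subseteq> prim X le \<Longrightarrow> Lset Y le add smult x \<subseteq> Lset X le add smult x"
  unfolding Lset_def by blast

locale evs_space =
  fixes X :: "'x set" and le :: "'x \<Rightarrow> 'x \<Rightarrow> bool" and add :: "'x \<Rightarrow> 'x \<Rightarrow> 'x"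
    and smult :: "'k::field \<Rightarrow> 'x \<Rightarrow> 'x" and th :: 'x
  assumes evs: "evs X le add smult th"
begin

lemma
  shows zero_closed: "th \<in> X"
    and add_closed [rule_format]: "\<forall>x\<in>X. \<forall>y\<in>X. add x y \<in> X"
    and smult_closed [rule_format]: "\<forall>a. \<forall>x\<in>X. smult a x \<in> X"
    and le_refl [rule_format]: "\<forall>x\<in>X. le x x"
    and le_antisym [rule_format]: "\<forall>x\<in>X. \<forall>y\<in>X. le x y \<and> le y x \<longrightarrow> x = y"
    and le_trans [rule_format]: "\<forall>x\<in>X. \<forall>y\<in>X. \<forall>z\<in>X. le x y \<and> le y z \<longrightarrow> le x z"
    and a_assoc [rule_format]: "\<forall>x\<in>X. \<forall>y\<in>X. \<forall>z\<in>X. add (add x y) z = add x (add y z)"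
    and a_comm [rule_format]: "\<forall>x\<in>X. \<forall>y\<in>X. add x y = add y x"
    and r_zero [rule_format]: "\<forall>x\<in>X. add x th = x"
    and le_mono [rule_format]: "\<forall>x\<in>X. \<forall>y\<in>X. le x y \<longrightarrow>
          (\<forall>z\<in>X. le (add x z) (add y z)) \<and> (\<forall>a. le (smult a x) (smult a y))"
    and smult_add_right [rule_format]: "\<forall>a. \<forall>x\<in>X. \<forall>y\<in>X. smult a (add x y) = add (smult a x) (smult a y)"
    and smult_smult [rule_format]: "\<forall>a b. \<forall>x\<in>X. smult a (smult b x) = smult (a * b) x"
    and smult_add_left_le [rule_format]: "\<forall>a b. \<forall>x\<in>X. le (smult (a + b) x) (add (smult a x) (smult b x))"
    and smult_one [rule_format]: "\<forall>x\<in>X. smult 1 x = x"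
    and smult_eq_zero_iff [rule_format]: "\<forall>a. \<forall>x\<in>X. smult a x = th \<longleftrightarrow> a = 0 \<or> x = th"
    and add_neg_eq_zero_iff [rule_format]: "\<forall>x\<in>X. add x (smult (-1) x) = th \<longleftrightarrow> x \<in> prim X le"
    and prim_below [rule_format]: "\<forall>x\<in>X. \<exists>p\<in>prim X le. le p x"
  using evs unfolding evs_def apply -
  by (elim conjE; assumption)+

lemma add_right_mono: "x \<in> X \<Longrightarrow> y \<in> X \<Longrightarrow> z \<in> X \<Longrightarrow> le x y \<Longrightarrow> le (add x z) (add y z)"
  using le_mono by blast

lemma smult_mono: "x \<in> X \<Longrightarrow> y \<in> X \<Longrightarrow> le x y \<Longrightarrow> le (smult a x) (smult a y)"
  using le_mono by blast

lemma l_zero: "x \<in> X \<Longrightarrow> add th x = x"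
  using a_comm r_zero zero_closed by metis

lemma prim_closed: "p \<in> prim X le \<Longrightarrow> p \<in> X"
  using prim_subset[of X le] by blast

lemma le_add_nonneg:
  assumes "le th x" "x \<in> X" "y \<in> X"
  shows "le y (add x y)"
  using add_right_mono[OF zero_closed assms(2,3,1)] l_zero assms(3) by simp

lemma a_interchange:
  assumes "a \<in> X" "b \<in> X" "c \<in> X" "d \<in> X"
  shows "add (add a b) (add c d) = add (add a c) (add b d)"
proof -
  have "add (add a b) (add c d) = add a (add (add b c) d)"
    using assms by (simp add: a_assoc add_closed)
  also have "\<dots> = add a (add (add c b) d)" using assms a_comm by simp
  also have "\<dots> = add (add a c) (add b d)"
    using assms by (simp add: a_assoc add_closed)
  finally show ?thesis .
qed

lemma add_neg_prim: "p \<in> prim X le \<Longrightarrow> add p (smult (-1) p) = th"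
  using add_neg_eq_zero_iff prim_closed by blast

lemma neg_add_prim: "p \<in> prim X le \<Longrightarrow> add (smult (-1) p) p = th"
  using add_neg_prim a_comm prim_closed smult_closed by metis

lemma prim_add_closed:
  assumes "p \<in> prim X le" "q \<in> prim X le"
  shows "add p q \<in> prim X le"
proof -
  have X: "p \<in> X" "q \<in> X" "smult (-1) p \<in> X" "smult (-1) q \<in> X"
    using assms prim_closed smult_closed by auto
  have "add (add p q) (smult (-1) (add p q)) = add (add p q) (add (smult (-1) p) (smult (-1) q))"
    using X smult_add_right by simp
  also have "\<dots> = add (add p (smult (-1) p)) (add q (smult (-1) q))"
    using X a_interchange by blast
  also have "\<dots> = th" using assms add_neg_prim r_zero zero_closed by simp
  finally show ?thesis using add_neg_eq_zero_iff[THEN iffD1] add_closed X by blast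
qed

lemma prim_smult_closed:
  assumes "p \<in> prim X le"
  shows "smult a p \<in> prim X le"
proof -
  have X: "p \<in> X" "smult (-1) p \<in> X" using assms prim_closed smult_closed by auto
  have "add (smult a p) (smult (-1) (smult a p)) = add (smult a p) (smult a (smult (-1) p))"
    using X smult_smult by (simp add: mult.commute)
  also have "\<dots> = smult a (add p (smult (-1) p))"
    using X smult_add_right by simp
  also have "\<dots> = th" using assms add_neg_prim smult_eq_zero_iff zero_closed by simp
  finally show ?thesis using add_neg_eq_zero_iff[THEN iffD1] smult_closed X by blast
qed

lemma zero_prim: "th \<in> prim X le"
proof -
  have "smult (-1) th = th" using smult_eq_zero_iff zero_closed by blast
  then have "add th (smult (-1) th) = th" using r_zero zero_closed by simp
  then show ?thesis using add_neg_eq_zero_iff[THEN iffD1] zero_closed by blast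
qed

lemma prim_of_smult_add_prim:
  assumes "z \<in> X" "a \<noteq> 0" "p \<in> prim X le" "add (smult a z) p \<in> prim X le"
  shows "z \<in> prim X le"
proof -
  have X: "smult a z \<in> X" "p \<in> X" "smult (-1) p \<in> X"
    using assms(1,3) prim_closed smult_closed by auto
  have "add (smult a z) p \<in> prim X le" by fact
  then have "add (add (smult a z) p) (smult (-1) p) \<in> prim X le"
    using prim_add_closed prim_smult_closed assms(3) by blast
  moreover have "add (add (smult a z) p) (smult (-1) p) = smult a z"
    using a_assoc add_neg_prim[OF assms(3)] r_zero X by simp
  ultimately have "smult (inverse a) (smult a z) \<in> prim X le"
    using prim_smult_closed by simp
  then show ?thesis using smult_smult smult_one assms(1,2) by simp
qed

lemma lspan_subset: "A \<subseteq> X \<Longrightarrow> lspan add smult th A \<subseteq> X"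
proof
  fix x assume "x \<in> lspan add smult th A" and "A \<subseteq> X"
  then show "x \<in> X"
    by (induction rule: lspan.induct) (auto intro: zero_closed add_closed smult_closed)
qed

lemma lspan_subset_prim: "A \<subseteq> prim X le \<Longrightarrow> lspan add smult th A \<subseteq> prim X le"
proof
  fix x assume "x \<in> lspan add smult th A" and "A \<subseteq> prim X le"
  then show "x \<in> prim X le"
    by (induction rule: lspan.induct) (auto intro: prim_add_closed prim_smult_closed zero_prim)
qed

lemma evs_subset_intro:
  assumes "Y \<subseteq> X" and "th \<in> Y"
    and "\<And>x y. x \<in> Y \<Longrightarrow> y \<in> Y \<Longrightarrow> add x y \<in> Y"
    and "\<And>a x. x \<in> Y \<Longrightarrow> smult a x \<in> Y"
    and "\<And>x. x \<in> Y \<Longrightarrow> add x (smult (-1) x) = th \<longleftrightarrow> x \<in> prim Y le"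
    and "\<And>x. x \<in> Y \<Longrightarrow> \<exists>p\<in>prim Y le. le p x"
  shows "evs Y le add smult th"
  unfolding evs_def
proof (intro conjI ballI allI impI)
  have Y: "x \<in> Y \<Longrightarrow> x \<in> X" for x using assms(1) by blast
  show "le x x" if "x \<in> Y" for x using that Y le_refl by blast
  show "x = y" if "x \<in> Y" "y \<in> Y" "le x y \<and> le y x" for x y
    using that Y le_antisym by blast
  show "le x z" if "x \<in> Y" "y \<in> Y" "z \<in> Y" "le x y \<and> le y z" for x y z
    using that Y le_trans by blast
  show "add (add x y) z = add x (add y z)" if "x \<in> Y" "y \<in> Y" "z \<in> Y" for x y z
    using that Y a_assoc by blast
  show "add x y = add y x" if "x \<in> Y" "y \<in> Y" for x y using that Y a_comm by blast
  show "add x th = x" if "x \<in> Y" for x using that Y r_zero by blast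
  show "le (add x z) (add y z)" if "x \<in> Y" "y \<in> Y" "le x y" "z \<in> Y" for x y z
    using that Y add_right_mono by blast
  show "le (smult a x) (smult a y)" if "x \<in> Y" "y \<in> Y" "le x y" for x y a
    using that Y smult_mono by blast
  show "smult a (add x y) = add (smult a x) (smult a y)" if "x \<in> Y" "y \<in> Y" for a x y
    using that Y smult_add_right by blast
  show "smult a (smult b x) = smult (a * b) x" if "x \<in> Y" for a b x
    using that Y smult_smult by blast
  show "le (smult (a + b) x) (add (smult a x) (smult b x))" if "x \<in> Y" for a b x
    using that Y smult_add_left_le by blast
  show "smult 1 x = x" if "x \<in> Y" for x using that Y smult_one by blast
  show "smult a x = th \<longleftrightarrow> a = 0 \<or> x = th" if "x \<in> Y" for a x
    using that Y smult_eq_zero_iff by blast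
qed (use assms(2-) in auto)

lemma self_in_Lset:
  assumes "x \<in> X"
  shows "x \<in> Lset X le add smult x"
proof -
  have "le (add (smult 1 x) th) x" using assms smult_one r_zero le_refl by simp
  then show ?thesis unfolding Lset_def using assms zero_prim one_neq_zero by blast
qed

lemma Lset_add_prim:
  assumes "z \<in> Lset X le add smult x" and "p \<in> prim X le" and "x \<in> X"
  shows "add z p \<in> Lset X le add smult x"
proof -
  obtain a q where aq: "a \<noteq> 0" "q \<in> prim X le" "le (add (smult a x) q) z" and "z \<in> X"
    using assms(1) unfolding Lset_def by blast
  have X: "smult a x \<in> X" "q \<in> X" "p \<in> X" using assms aq prim_closed smult_closed by auto
  have "le (add (add (smult a x) q) p) (add z p)"
    using add_right_mono add_closed X \<open>z \<in> X\<close> aq(3) by blast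
  then have "le (add (smult a x) (add q p)) (add z p)"
    using a_assoc X by simp
  moreover have "add q p \<in> prim X le" using prim_add_closed aq(2) assms(2) by blast
  ultimately show ?thesis
    unfolding Lset_def using aq(1) add_closed \<open>z \<in> X\<close> X(3) by blast
qed

lemma orderly_basis_independent:
  "orderly_basis X le add smult B \<Longrightarrow> x \<in> B \<Longrightarrow> y \<in> B \<Longrightarrow> x \<noteq> y \<Longrightarrow>
    x \<notin> Lset X le add smult y"
  unfolding orderly_basis_def by blast

definition prim_part :: "'x \<Rightarrow> 'x" where
  "prim_part x = (SOME p. p \<in> prim X le \<and> le p x)"

lemma
  assumes "x \<in> X"
  shows prim_part_prim: "prim_part x \<in> prim X le"
    and prim_part_le: "le (prim_part x) x"
  using someI_ex[OF prim_below[OF assms, unfolded Bex_def]] unfolding prim_part_def by auto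

lemma prim_part_closed: "x \<in> X \<Longrightarrow> prim_part x \<in> X"
  using prim_part_prim prim_closed by blast

definition shift :: "'x \<Rightarrow> 'x" where
  "shift x = add x (smult (-1) (prim_part x))"

lemma shift_closed: "x \<in> X \<Longrightarrow> shift x \<in> X"
  unfolding shift_def by (simp add: add_closed smult_closed prim_part_closed)

lemma zero_le_shift:
  assumes x: "x \<in> X"
  shows "le th (shift x)"
proof -
  have "le (add (prim_part x) (smult (-1) (prim_part x))) (add x (smult (-1) (prim_part x)))"
    using add_right_mono prim_part_le x prim_part_closed smult_closed by blast
  then show ?thesis using add_neg_prim prim_part_prim x unfolding shift_def by simp
qed

lemma shift_add_prim_part: "x \<in> X \<Longrightarrow> add (shift x) (prim_part x) = x"
  unfolding shift_def
  by (simp add: a_assoc smult_closed prim_part_closed neg_add_prim prim_part_prim r_zero)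

lemma shift_not_prim: "x \<in> X \<Longrightarrow> x \<notin> prim X le \<Longrightarrow> shift x \<notin> prim X le"
  by (metis shift_add_prim_part prim_add_closed prim_part_prim)

lemma Lset_shift_subset:
  assumes x: "x \<in> X"
  shows "Lset X le add smult (shift x) \<subseteq> Lset X le add smult x"
proof
  fix z assume "z \<in> Lset X le add smult (shift x)"
  then obtain a p where ap: "a \<noteq> 0" "p \<in> prim X le" "le (add (smult a (shift x)) p) z" "z \<in> X"
    unfolding Lset_def by blast
  let ?r = "smult a (smult (-1) (prim_part x))"
  have X: "smult a x \<in> X" "?r \<in> X" "p \<in> X"
    using x ap(2) prim_closed prim_part_closed smult_closed by auto
  have "add (smult a (shift x)) p = add (smult a x) (add ?r p)"
    unfolding shift_def using X x prim_part_closed smult_closed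
    by (simp add: smult_add_right a_assoc)
  moreover have "add ?r p \<in> prim X le"
    using prim_add_closed prim_smult_closed prim_part_prim[OF x] ap(2) by blast
  ultimately show "z \<in> Lset X le add smult x"
    unfolding Lset_def using ap by auto
qed

lemma shift_in_Lset_shiftD:
  assumes "x \<in> X" "y \<in> X" "shift x \<in> Lset X le add smult (shift y)"
  shows "x \<in> Lset X le add smult y"
proof -
  have "shift x \<in> Lset X le add smult y" using assms Lset_shift_subset by blast
  then have "add (shift x) (prim_part x) \<in> Lset X le add smult y"
    using Lset_add_prim prim_part_prim assms by blast
  then show ?thesis using shift_add_prim_part assms(1) by simp
qed

lemma inj_on_shift:
  assumes "orderly_basis X le add smult B"
  shows "inj_on shift B"
proof
  fix x y assume xy: "x \<in> B" "y \<in> B" "shift x = shift y"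
  have B: "B \<subseteq> X" using assms unfolding orderly_basis_def by blast
  have "shift x \<in> Lset X le add smult (shift y)"
    using self_in_Lset shift_closed xy B by auto
  then have "x \<in> Lset X le add smult y" using shift_in_Lset_shiftD xy B by blast
  then show "x = y" using orderly_basis_independent assms xy by blast
qed

end

locale span_sum = evs_space +
  fixes Z D
  assumes Z_subset: "Z \<subseteq> X"
    and zero_le_Z: "z \<in> Z \<Longrightarrow> le th z"
    and D_subset: "D \<subseteq> prim X le"
begin

abbreviation S where "S \<equiv> lspan add smult th Z"
abbreviation V where "V \<equiv> lspan add smult th D"

definition Y where
  "Y = {add s v | s v. s \<in> S \<and> v \<in> V}"

lemma S_subset: "S \<subseteq> X"
  using lspan_subset Z_subset by blast

lemma V_subset_prim: "V \<subseteq> prim X le"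
  using lspan_subset_prim D_subset by blast

lemma V_subset: "V \<subseteq> X"
  using V_subset_prim prim_closed by blast

lemma zero_le_S: "s \<in> S \<Longrightarrow> le th s"
proof (induction rule: lspan.induct)
  case zero
  then show ?case using le_refl zero_closed by blast
next
  case (base z)
  then show ?case using zero_le_Z by blast
next
  case (plus x y)
  have xy: "x \<in> X" "y \<in> X" using plus.hyps S_subset by auto
  then have "le y (add x y)" using le_add_nonneg plus.IH(1) by blast
  then show ?case using le_trans plus.IH(2) zero_closed xy add_closed by blast
next
  case (scale x a)
  have "x \<in> X" using scale.hyps S_subset by auto
  then have "le (smult a th) (smult a x)" using smult_mono scale.IH zero_closed by blast
  moreover have "smult a th = th" using smult_eq_zero_iff zero_closed by blast
  ultimately show ?case by simp
qed

(* Works because S lies above th: adding further elements of S preserves lower bounds. *)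
lemma S_dominates_generator:
  "s \<in> S \<Longrightarrow> s = th \<or> (\<exists>a z. a \<noteq> 0 \<and> z \<in> Z \<and> le (smult a z) s)"
proof (induction rule: lspan.induct)
  case zero
  then show ?case by blast
next
  case (base z)
  then have "z \<in> X" using Z_subset by blast
  then show ?case using base smult_one le_refl by (metis one_neq_zero)
next
  case (plus x y)
  have xy: "x \<in> X" "y \<in> X" using plus.hyps S_subset by auto
  show ?case
  proof (cases "x = th")
    case True
    then show ?thesis using plus.IH(2) l_zero xy by simp
  next
    case False
    then obtain a z where az: "a \<noteq> 0" "z \<in> Z" "le (smult a z) x" using plus.IH(1) by blast
    have azX: "smult a z \<in> X" using az Z_subset smult_closed by blast
    have "le (smult a z) (add y (smult a z))"
      using le_add_nonneg zero_le_S plus.hyps(2) azX xy by blast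
    then have "le (smult a z) (add (smult a z) y)" using a_comm azX xy by simp
    moreover have "le (add (smult a z) y) (add x y)" using add_right_mono az azX xy by blast
    ultimately have "le (smult a z) (add x y)" using le_trans add_closed azX xy by blast
    then show ?thesis using az by blast
  qed
next
  case (scale x b)
  have xX: "x \<in> X" using scale.hyps S_subset by auto
  show ?case
  proof (cases "b = 0 \<or> x = th")
    case True
    then show ?thesis using smult_eq_zero_iff xX by blast
  next
    case False
    then obtain a z where az: "a \<noteq> 0" "z \<in> Z" "le (smult a z) x" using scale.IH by blast
    have "le (smult b (smult a z)) (smult b x)" using smult_mono az xX Z_subset smult_closed by blast
    then have "le (smult (b * a) z) (smult b x)" using smult_smult az Z_subset by auto
    moreover have "b * a \<noteq> 0" using False az by simp
    ultimately show ?thesis using az by blast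
  qed
qed

lemma le_add_S: "s \<in> S \<Longrightarrow> v \<in> V \<Longrightarrow> le v (add s v)"
  using le_add_nonneg zero_le_S S_subset V_subset by blast

lemma Y_subset: "Y \<subseteq> X"
  unfolding Y_def using S_subset V_subset add_closed by blast

lemma S_subset_Y: "S \<subseteq> Y"
proof
  fix s assume "s \<in> S"
  then have "s = add s th" using r_zero S_subset by auto
  then show "s \<in> Y" unfolding Y_def using \<open>s \<in> S\<close> lspan.zero[of th add smult D] by blast
qed

lemma V_subset_Y: "V \<subseteq> Y"
proof
  fix v assume "v \<in> V"
  then have "v = add th v" using l_zero V_subset by auto
  then show "v \<in> Y" unfolding Y_def using \<open>v \<in> V\<close> lspan.zero[of th add smult Z] by blast
qed

lemma prim_Y: "prim Y le = V"
proof
  show "V \<subseteq> prim Y le"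
  proof
    fix v assume "v \<in> V"
    then have "v \<in> prim X le" "v \<in> Y" using V_subset_prim V_subset_Y by auto
    then show "v \<in> prim Y le"
      unfolding prim_def using prim_minimal[of v X le] Y_subset by blast
  qed
next
  show "prim Y le \<subseteq> V"
  proof
    fix y assume y: "y \<in> prim Y le"
    then obtain s v where sv: "y = add s v" "s \<in> S" "v \<in> V" unfolding prim_def Y_def by blast
    then have "le v y" "v \<in> Y" using le_add_S V_subset_Y by auto
    then have "v = y" using y unfolding prim_def by blast
    then show "y \<in> V" using sv by blast
  qed
qed

lemma add_closed_Y: "x \<in> Y \<Longrightarrow> y \<in> Y \<Longrightarrow> add x y \<in> Y"
proof -
  assume "x \<in> Y" "y \<in> Y"
  then obtain s1 v1 s2 v2 where h: "x = add s1 v1" "s1 \<in> S" "v1 \<in> V" "y = add s2 v2" "s2 \<in> S" "v2 \<in> V"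
    unfolding Y_def by blast
  then have "add x y = add (add s1 s2) (add v1 v2)"
    using a_interchange S_subset V_subset by blast
  moreover have "add s1 s2 \<in> S" "add v1 v2 \<in> V" using h by (auto intro: lspan.plus)
  ultimately show ?thesis unfolding Y_def by blast
qed

lemma smult_closed_Y: "x \<in> Y \<Longrightarrow> smult a x \<in> Y"
proof -
  assume "x \<in> Y"
  then obtain s v where h: "x = add s v" "s \<in> S" "v \<in> V" unfolding Y_def by blast
  then have "smult a x = add (smult a s) (smult a v)"
    using smult_add_right S_subset V_subset by blast
  moreover have "smult a s \<in> S" "smult a v \<in> V" using h by (auto intro: lspan.scale)
  ultimately show ?thesis unfolding Y_def by blast
qed

lemma evs_Y: "evs Y le add smult th"
proof (rule evs_subset_intro)
  show "Y \<subseteq> X" by (rule Y_subset)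
  show "th \<in> Y" using S_subset_Y lspan.zero[of th add smult Z] by blast
  show "add x y \<in> Y" if "x \<in> Y" "y \<in> Y" for x y using that by (rule add_closed_Y)
  show "smult a x \<in> Y" if "x \<in> Y" for a x using that by (rule smult_closed_Y)
  fix x assume x: "x \<in> Y"
  then obtain s v where sv: "x = add s v" "s \<in> S" "v \<in> V" unfolding Y_def by blast
  then have "le v x" using le_add_S by blast
  then show "\<exists>p\<in>prim Y le. le p x" using sv prim_Y by blast
  show "add x (smult (-1) x) = th \<longleftrightarrow> x \<in> prim Y le"
  proof
    assume "add x (smult (-1) x) = th"
    then have "x \<in> prim X le" using add_neg_eq_zero_iff Y_subset x by blast
    then have "v = x" using prim_minimal[of x X le v] \<open>le v x\<close> V_subset sv by blast
    then show "x \<in> prim Y le" using prim_Y sv by blast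
  next
    assume "x \<in> prim Y le"
    then show "add x (smult (-1) x) = th" using prim_Y V_subset_prim add_neg_prim by blast
  qed
qed

lemma Y_diff_prim_eq_UN_Lset:
  assumes "Z \<inter> prim X le = {}"
  shows "Y - V = (\<Union>z\<in>Z. Lset Y le add smult z)"
proof
  show "Y - V \<subseteq> (\<Union>z\<in>Z. Lset Y le add smult z)"
  proof
    fix w assume w: "w \<in> Y - V"
    then obtain s v where sv: "w = add s v" "s \<in> S" "v \<in> V" unfolding Y_def by blast
    have "s \<noteq> th" using w sv l_zero V_subset by auto
    then obtain a z where az: "a \<noteq> 0" "z \<in> Z" "le (smult a z) s"
      using S_dominates_generator sv by blast
    have "le (add (smult a z) v) w"
      using add_right_mono az smult_closed Z_subset S_subset V_subset sv by blast
    then have "w \<in> Lset Y le add smult z"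
      unfolding Lset_def prim_Y using w az sv by blast
    then show "w \<in> (\<Union>z\<in>Z. Lset Y le add smult z)" using az by blast
  qed
next
  show "(\<Union>z\<in>Z. Lset Y le add smult z) \<subseteq> Y - V"
  proof
    fix w assume "w \<in> (\<Union>z\<in>Z. Lset Y le add smult z)"
    then obtain z a p where h: "z \<in> Z" "w \<in> Y" "a \<noteq> 0" "p \<in> V" "le (add (smult a z) p) w"
      unfolding Lset_def prim_Y by blast
    have "w \<notin> V"
    proof
      assume "w \<in> V"
      then have wP: "w \<in> prim X le" using V_subset_prim by blast
      have "add (smult a z) p \<in> X" using h Z_subset V_subset add_closed smult_closed by blast
      then have "add (smult a z) p = w" using prim_minimal[OF wP _ h(5)] by blast
      then have "z \<in> prim X le"
        using prim_of_smult_add_prim[of z a p] Z_subset V_subset_prim wP h by blast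
      then show False using assms h(1) by blast
    qed
    then show "w \<in> Y - V" using h(2) by blast
  qed
qed

end

context evs_space
begin

lemma exists_subevs_with_bases:
  assumes B: "orderly_basis X le add smult B"
    and H: "hamel_basis (prim X le) add smult th H"
    and "G \<subseteq> B" and "D \<subseteq> H"
  shows "\<exists>Y. subevs Y X le add smult \<and>
           (\<exists>B'. orderly_basis Y le add smult B' \<and> B' \<approx> G) \<and>
           hamel_basis (prim Y le) add smult th D"
proof -
  have G: "G \<subseteq> X - prim X le" using B \<open>G \<subseteq> B\<close> unfolding orderly_basis_def by blast
  have D: "D \<subseteq> prim X le" using H \<open>D \<subseteq> H\<close> unfolding hamel_basis_def by blast
  interpret span_sum X le add smult th "shift ` G" D
    using G D shift_closed zero_le_shift by unfold_locales auto
  have not_prim: "shift ` G \<inter> prim X le = {}" using G shift_not_prim by blast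
  have "orderly_basis Y le add smult (shift ` G)"
    unfolding orderly_basis_def prim_Y
  proof (intro conjI ballI impI)
    have "shift ` G \<subseteq> S" by (auto intro: lspan.base)
    then show "shift ` G \<subseteq> Y - V"
      using S_subset_Y not_prim V_subset_prim by blast
    show "Y - V = (\<Union>z\<in>shift ` G. Lset Y le add smult z)"
      using not_prim by (rule Y_diff_prim_eq_UN_Lset)
    fix x y assume "x \<in> shift ` G" "y \<in> shift ` G" "x \<noteq> y"
    then obtain g h where gh: "g \<in> G" "h \<in> G" "g \<noteq> h" "x = shift g" "y = shift h" by blast
    have Lset_Y: "Lset Y le add smult z \<subseteq> Lset X le add smult z" for z
      using Y_subset prim_Y V_subset_prim by (intro Lset_subset) simp_all
    have "g \<notin> Lset X le add smult h" "h \<notin> Lset X le add smult g"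
      using orderly_basis_independent[OF B] gh \<open>G \<subseteq> B\<close> by blast+
    then show "x \<notin> Lset Y le add smult y" "y \<notin> Lset Y le add smult x"
      using shift_in_Lset_shiftD Lset_Y G gh by blast+
  qed
  moreover have "shift ` G \<approx> G"
    using inj_on_subset[OF inj_on_shift[OF B] \<open>G \<subseteq> B\<close>] by (rule inj_on_image_eqpoll_self)
  moreover have "hamel_basis (prim Y le) add smult th D"
    unfolding prim_Y using H \<open>D \<subseteq> H\<close> by (rule hamel_basis_subset)
  moreover have "subevs Y X le add smult"
    unfolding subevs_def using Y_subset evs_Y by blast
  ultimately show ?thesis by blast
qed

end

theorem mainTheorem9:
  fixes X :: "'x set" and le :: "'x \<Rightarrow> 'x \<Rightarrow> bool" and add :: "'x \<Rightarrow> 'x \<Rightarrow> 'x"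
    and smult :: "'k::field \<Rightarrow> 'x \<Rightarrow> 'x" and th :: 'x
    and B H :: "'x set" and G :: "'g set" and D :: "'d set"
  assumes "evs X le add smult th"
    and "orderly_basis X le add smult B"
    and "hamel_basis (prim X le) add smult th H"
    and "G \<lesssim> B" and "D \<lesssim> H"
  shows "\<exists>Y. subevs Y X le add smult \<and>
           (\<exists>B' H'. orderly_basis Y le add smult B' \<and> B' \<approx> G \<and>
                    hamel_basis (prim Y le) add smult th H' \<and> H' \<approx> D)"
proof -
  interpret evs_space X le add smult th by (rule evs_space.intro) (rule assms(1))
  obtain f where f: "inj_on f G" "f ` G \<subseteq> B" using assms(4) unfolding lepoll_def by blast
  obtain h where h: "inj_on h D" "h ` D \<subseteq> H" using assms(5) unfolding lepoll_def by blast
  obtain Y B' where Y: "subevs Y X le add smult" "orderly_basis Y le add smult B'" "B' \<approx> f ` G"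
      "hamel_basis (prim Y le) add smult th (h ` D)"
    using exists_subevs_with_bases[OF assms(2,3) f(2) h(2)] by blast
  have "B' \<approx> G" using Y(3) inj_on_image_eqpoll_self[OF f(1)] eqpoll_trans by blast
  moreover have "h ` D \<approx> D" using inj_on_image_eqpoll_self[OF h(1)] .
  ultimately show ?thesis using Y(1,2,4) by blast
qed

end
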